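(* Let $G$ be a connected graph of order $n$ and stability number $\alpha$ such that $F(G) \ge F(H)$ for every connected graph $H$ of order $n$ and stability number $\alpha$. Then either $G$ is $\alpha$-critical, or $G$ has an $\alpha$-critical decomposition.
   Context: All graphs are finite, simple and undirected; $\alpha(G)$ denotes the stability number. The Fibonacci index $F(G)$ is the number of stable sets of $G$, including the empty set. For an edge $e$, $G-e$ denotes $G$ with the edge $e$ deleted. An edge $e$ is $\alpha$-critical if $\alpha(G-e)>\alpha(G)$ and $\alpha$-safe otherwise; a graph is $\alpha$-critical if all its edges are $\alpha$-critical (a graph with no edge counts as $\alpha$-critical). A bridge of a connected graph $G$ is an edge $e$ such that $G-e$ is disconnected. For an $\alpha$-safe bridge $e=v_1v_2$ of $G$, the associated decomposition is $(G_1,v_1,G_2,v_2)$ where $G_1,G_2$ are the two connected components of $G-e$ with $v_1\in V(G_1)$, $v_2\in V(G_2)$. A decomposition $(G_1,v_1,G_2,v_2)$ is $\alpha$-critical if $G_1$ is $\alpha$-critical. *)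

theory Defs
  imports Main
begin

definition is_graph :: "'a set \<Rightarrow> 'a set set \<Rightarrow> bool" where
  "is_graph V E \<longleftrightarrow> finite V \<and> (\<forall>e\<in>E. \<exists>u v. e = {u, v} \<and> u \<noteq> v \<and> u \<in> V \<and> v \<in> V)"

definition stable_set :: "'a set \<Rightarrow> 'a set set \<Rightarrow> 'a set \<Rightarrow> bool" where
  "stable_set V E S \<longleftrightarrow> S \<subseteq> V \<and> (\<forall>u\<in>S. \<forall>v\<in>S. {u, v} \<notin> E)"

definition alpha :: "'a set \<Rightarrow> 'a set set \<Rightarrow> nat" where
  "alpha V E = Max (card ` {S. stable_set V E S})"

text \<open>Fibonacci index: number of stable sets (including the empty set).\<close>
definition fib_index :: "'a set \<Rightarrow> 'a set set \<Rightarrow> nat" where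
  "fib_index V E = card {S. stable_set V E S}"

definition adj :: "'a set set \<Rightarrow> 'a \<Rightarrow> 'a \<Rightarrow> bool" where
  "adj E u v \<longleftrightarrow> {u, v} \<in> E"

definition connected_graph :: "'a set \<Rightarrow> 'a set set \<Rightarrow> bool" where
  "connected_graph V E \<longleftrightarrow> V \<noteq> {} \<and> (\<forall>u\<in>V. \<forall>v\<in>V. (adj E)\<^sup>*\<^sup>* u v)"

definition alpha_critical_edge :: "'a set \<Rightarrow> 'a set set \<Rightarrow> 'a set \<Rightarrow> bool" where
  "alpha_critical_edge V E e \<longleftrightarrow> alpha V (E - {e}) > alpha V E"

definition alpha_critical_graph :: "'a set \<Rightarrow> 'a set set \<Rightarrow> bool" where
  "alpha_critical_graph V E \<longleftrightarrow> (\<forall>e\<in>E. alpha_critical_edge V E e)"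

definition is_bridge :: "'a set \<Rightarrow> 'a set set \<Rightarrow> 'a set \<Rightarrow> bool" where
  "is_bridge V E e \<longleftrightarrow> e \<in> E \<and> connected_graph V E \<and> \<not> connected_graph V (E - {e})"

definition comp_verts :: "'a set \<Rightarrow> 'a set set \<Rightarrow> 'a \<Rightarrow> 'a set" where
  "comp_verts V E x = {w \<in> V. (adj E)\<^sup>*\<^sup>* x w}"

definition comp_edges :: "'a set \<Rightarrow> 'a set set \<Rightarrow> 'a \<Rightarrow> 'a set set" where
  "comp_edges V E x = {f \<in> E. f \<subseteq> comp_verts V E x}"

text \<open>G has an alpha-critical decomposition: there is an alpha-safe bridge e = v1 v2
  such that the component G1 of G - e containing v1 is alpha-critical.\<close>
definition has_alpha_critical_decomposition :: "'a set \<Rightarrow> 'a set set \<Rightarrow> bool" where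
  "has_alpha_critical_decomposition V E \<longleftrightarrow>
     (\<exists>v1 v2. v1 \<noteq> v2 \<and> is_bridge V E {v1, v2} \<and> \<not> alpha_critical_edge V E {v1, v2} \<and>
        alpha_critical_graph (comp_verts V (E - {{v1, v2}}) v1) (comp_edges V (E - {{v1, v2}}) v1))"

end

theory Submission
  imports Defs
begin

(* Deleting an edge of a graph creates a new stable set (the edge itself), so it
   strictly increases the Fibonacci index.  Hence in a graph G maximising F among connected
   graphs of given order and stability number, deleting an alpha-safe edge must disconnect G:
   every alpha-safe edge is a bridge.  Now choose an alpha-safe bridge e = v1 v2 for which the
   component G1 of G - e containing v1 is as small as possible.  If some edge f of G1 were
   alpha-safe in G1, it would also be alpha-safe in G (a maximum stable set of G - f splits into
   a part inside G1 and a part outside, and the inside part can be traded for a maximum stable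
   set of G1), hence a bridge of G; one endpoint x of f is then cut off from v1 by f, and the
   component of G - f containing x lies strictly inside G1, contradicting minimality. *)

section \<open>Stable sets and the stability number\<close>

lemma finite_stable_sets: "finite V \<Longrightarrow> finite {S. stable_set V E S}"
  by (rule finite_subset[of _ "Pow V"]) (auto simp: stable_set_def)

lemma stable_set_empty: "stable_set V E {}"
  by (simp add: stable_set_def)

lemma stable_set_finite: "finite V \<Longrightarrow> stable_set V E S \<Longrightarrow> finite S"
  unfolding stable_set_def using finite_subset by blast

lemma card_le_alpha: "finite V \<Longrightarrow> stable_set V E S \<Longrightarrow> card S \<le> alpha V E"
  unfolding alpha_def by (rule Max_ge) (auto intro: finite_stable_sets)

lemma alpha_attained:
  assumes "finite V"
  obtains S where "stable_set V E S" "card S = alpha V E"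
proof -
  have "alpha V E \<in> card ` {S. stable_set V E S}"
    unfolding alpha_def using finite_stable_sets[OF assms, of E] stable_set_empty[of V E]
    by (intro Max_in) auto
  then show ?thesis using that by auto
qed

lemma stable_set_antimono: "E' \<subseteq> E \<Longrightarrow> stable_set V E S \<Longrightarrow> stable_set V E' S"
  unfolding stable_set_def by blast

lemma alpha_antimono: "finite V \<Longrightarrow> E' \<subseteq> E \<Longrightarrow> alpha V E \<le> alpha V E'"
  by (metis alpha_attained card_le_alpha stable_set_antimono)

lemma stable_set_avoiding_edge:
  assumes "stable_set V (E - {f}) S" "f \<subseteq> A" "S \<inter> A = {}"
  shows "stable_set V E S"
  using assms unfolding stable_set_def by blast

(* Strict monotonicity of the Fibonacci index: the deleted edge is a new stable set *)
lemma fib_index_delete_edge: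
  assumes g: "is_graph V E" and e: "e \<in> E"
  shows "fib_index V E < fib_index V (E - {e})"
proof -
  have fin: "finite V" using g by (simp add: is_graph_def)
  obtain u v where uv: "e = {u, v}" "u \<noteq> v" "u \<in> V" "v \<in> V"
    using g e unfolding is_graph_def by blast
  have no_loops: "{x} \<notin> E" for x
    using g unfolding is_graph_def by (metis doubleton_eq_iff insert_absorb2)
  have "stable_set V (E - {e}) e"
    using uv no_loops unfolding stable_set_def by (auto simp: insert_commute)
  moreover have "\<not> stable_set V E e" using uv e unfolding stable_set_def by auto
  ultimately have "{S. stable_set V E S} \<subset> {S. stable_set V (E - {e}) S}"
    using stable_set_antimono[of "E - {e}" E V] by blast
  then show ?thesis unfolding fib_index_def
    by (intro psubset_card_mono finite_stable_sets fin)
qed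

lemma maximizer_safe_edge_is_bridge:
  fixes V :: "'a set" and E :: "'a set set"
  assumes g: "is_graph V E" and c: "connected_graph V E"
    and max: "\<forall>(W :: 'a set) (D :: 'a set set). is_graph W D \<and> connected_graph W D \<and>
           card W = card V \<and> alpha W D = alpha V E \<longrightarrow> fib_index V E \<ge> fib_index W D"
    and e: "e \<in> E" and safe: "\<not> alpha_critical_edge V E e"
  shows "is_bridge V E e"
proof (rule ccontr)
  assume "\<not> is_bridge V E e"
  then have c': "connected_graph V (E - {e})" using e c by (simp add: is_bridge_def)
  have fin: "finite V" using g by (simp add: is_graph_def)
  have g': "is_graph V (E - {e})" using g by (simp add: is_graph_def)
  have "alpha V (E - {e}) = alpha V E"
    using safe alpha_antimono[OF fin, of "E - {e}" E] by (auto simp: alpha_critical_edge_def)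
  then have "fib_index V (E - {e}) \<le> fib_index V E" using max g' c' by blast
  with fib_index_delete_edge[OF g e] show False by simp
qed

section \<open>Connected components\<close>

lemma comp_verts_closed:
  "u \<in> comp_verts V E x \<Longrightarrow> adj E u w \<Longrightarrow> w \<in> V \<Longrightarrow> w \<in> comp_verts V E x"
  unfolding comp_verts_def by (auto intro: rtranclp.rtrancl_into_rtrancl)

(* No edge joins a component to the rest, so stable sets on both sides combine *)
lemma stable_union_across_component:
  assumes T: "stable_set (comp_verts V E x) (comp_edges V E x) T"
    and S: "stable_set V E S" and disj: "S \<inter> comp_verts V E x = {}"
  shows "stable_set V E (T \<union> S)"
proof -
  let ?C = "comp_verts V E x"
  have TC: "T \<subseteq> ?C" and SV: "S \<subseteq> V" using T S by (auto simp: stable_set_def)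
  have cross: "{u, w} \<notin> E" if "u \<in> T" "w \<in> S" for u w
  proof
    assume "{u, w} \<in> E"
    then have "w \<in> ?C" using comp_verts_closed[of u V E x w] that TC SV by (auto simp: adj_def)
    then show False using that(2) disj by blast
  qed
  have inside: "{u, w} \<notin> E" if "u \<in> T" "w \<in> T" for u w
    using T that TC unfolding stable_set_def comp_edges_def by blast
  have outside: "{u, w} \<notin> E" if "u \<in> S" "w \<in> S" for u w
    using S that unfolding stable_set_def by blast
  have "{u, w} \<notin> E" if "u \<in> T \<union> S" "w \<in> T \<union> S" for u w
    using that inside outside cross cross[of w u] by (auto simp: insert_commute)
  then show ?thesis using TC SV unfolding stable_set_def comp_verts_def by blast
qed

(* A maximum stable set S of (V, E - f) splits into
   S1 = S inside C, bounded by alpha(C - f), and S2 = S outside C, which together with a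
   maximum stable set of C is stable in (V,E). *)
lemma alpha_delete_edge_in_component:
  assumes fin: "finite V" and f: "f \<subseteq> comp_verts V E x"
  shows "alpha V (E - {f}) + alpha (comp_verts V E x) (comp_edges V E x)
         \<le> alpha (comp_verts V E x) (comp_edges V E x - {f}) + alpha V E"
proof -
  define C where "C = comp_verts V E x"
  define EC where "EC = comp_edges V E x"
  have CV: "C \<subseteq> V" by (auto simp: C_def comp_verts_def)
  have finC: "finite C" using fin CV finite_subset by blast
  obtain S where S: "stable_set V (E - {f}) S" "card S = alpha V (E - {f})"
    using alpha_attained[OF fin] by blast
  obtain T where T: "stable_set C EC T" "card T = alpha C EC"
    using alpha_attained[OF finC] by blast
  define S1 where "S1 = S \<inter> C"
  define S2 where "S2 = S - C"
  have "stable_set C (EC - {f}) S1"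
    using S(1) unfolding stable_set_def S1_def EC_def comp_edges_def by blast
  then have S1_le: "card S1 \<le> alpha C (EC - {f})" using card_le_alpha[OF finC] by blast
  have "stable_set V (E - {f}) S2" using S(1) unfolding stable_set_def S2_def by blast
  then have "stable_set V E S2"
    using f by (intro stable_set_avoiding_edge[of V E f S2 C]) (auto simp: C_def S2_def)
  then have "stable_set V E (T \<union> S2)"
    using T(1) by (intro stable_union_across_component) (auto simp: C_def EC_def S2_def)
  then have TS2_le: "card (T \<union> S2) \<le> alpha V E" using card_le_alpha[OF fin] by blast
  have finS: "finite S" using stable_set_finite[OF fin S(1)] .
  have "card (T \<union> S2) = card T + card S2"
    using stable_set_finite[OF finC T(1)] finS T(1)
    by (intro card_Un_disjoint) (auto simp: S2_def stable_set_def)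
  moreover have "card S = card S1 + card S2"
    using finS card_Un_disjoint[of S1 S2] by (simp add: S1_def S2_def Int_Diff_Un Int_Diff_disjoint)
  ultimately show ?thesis using S1_le TS2_le S(2) T(2) by (simp add: C_def EC_def)
qed

lemma safe_in_side_imp_safe:
  assumes fin: "finite V" and e: "\<not> alpha_critical_edge V E e"
    and f: "f \<in> comp_edges V (E - {e}) v"
    and f_safe: "\<not> alpha_critical_edge (comp_verts V (E - {e}) v) (comp_edges V (E - {e}) v) f"
  shows "\<not> alpha_critical_edge V E f"
proof -
  let ?C = "comp_verts V (E - {e}) v" and ?EC = "comp_edges V (E - {e}) v"
  have "alpha V (E - {f}) \<le> alpha V (E - {e} - {f})" by (rule alpha_antimono[OF fin]) blast
  moreover have "alpha V (E - {e} - {f}) + alpha ?C ?EC \<le> alpha ?C (?EC - {f}) + alpha V (E - {e})"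
    using f fin by (intro alpha_delete_edge_in_component) (auto simp: comp_edges_def)
  moreover have "alpha ?C (?EC - {f}) \<le> alpha ?C ?EC"
    using f_safe by (simp add: alpha_critical_edge_def)
  moreover have "alpha V (E - {e}) \<le> alpha V E"
    using e by (simp add: alpha_critical_edge_def)
  ultimately show ?thesis by (simp add: alpha_critical_edge_def)
qed

section \<open>Reachability and bridges\<close>

lemma edge_subset: "is_graph V E \<Longrightarrow> e \<in> E \<Longrightarrow> e \<subseteq> V"
  unfolding is_graph_def by fastforce

lemma reach_sym: "(adj E)\<^sup>*\<^sup>* u v \<Longrightarrow> (adj E)\<^sup>*\<^sup>* v u"
proof -
  have "symp (adj E)" by (auto intro: sympI simp: adj_def insert_commute)
  then show "(adj E)\<^sup>*\<^sup>* u v \<Longrightarrow> (adj E)\<^sup>*\<^sup>* v u" by (rule sympD[OF symp_rtranclp])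
qed

lemma reach_mono:
  assumes "E' \<subseteq> E" "(adj E')\<^sup>*\<^sup>* u v"
  shows "(adj E)\<^sup>*\<^sup>* u v"
proof -
  have "adj E' \<le> adj E" using assms(1) by (auto simp: adj_def)
  then show ?thesis using assms(2) by (rule rtranclp_mono[THEN predicate2D])
qed

lemma reach_without_edge:
  assumes "(adj (E - {f}))\<^sup>*\<^sup>* v a" "(adj (E - {f}))\<^sup>*\<^sup>* v b" "f = {a, b}"
  shows "(adj E)\<^sup>*\<^sup>* v y \<Longrightarrow> (adj (E - {f}))\<^sup>*\<^sup>* v y"
proof (induction rule: rtranclp_induct)
  case base then show ?case by simp
next
  case (step z y)
  show ?case
  proof (cases "{z, y} = f")
    case True
    then have "y = a \<or> y = b" using assms(3) by auto
    then show ?thesis using assms by auto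
  next
    case False
    then have "adj (E - {f}) z y" using step(2) by (simp add: adj_def)
    then show ?thesis using step(3) by (meson rtranclp.rtrancl_into_rtrancl)
  qed
qed

lemma bridge_end_unreachable:
  assumes br: "is_bridge V E {a, b}" and v: "v \<in> V"
  shows "\<not> (adj (E - {{a, b}}))\<^sup>*\<^sup>* v a \<or> \<not> (adj (E - {{a, b}}))\<^sup>*\<^sup>* v b"
proof (rule ccontr)
  assume "\<not> ?thesis"
  then have ends: "(adj (E - {{a, b}}))\<^sup>*\<^sup>* v a" "(adj (E - {{a, b}}))\<^sup>*\<^sup>* v b" by auto
  have c: "connected_graph V E" using br by (simp add: is_bridge_def)
  have "(adj (E - {{a, b}}))\<^sup>*\<^sup>* s t" if "s \<in> V" "t \<in> V" for s t
  proof -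
    have "(adj E)\<^sup>*\<^sup>* v s" "(adj E)\<^sup>*\<^sup>* v t" using c that v by (auto simp: connected_graph_def)
    then have "(adj (E - {{a, b}}))\<^sup>*\<^sup>* v s" "(adj (E - {{a, b}}))\<^sup>*\<^sup>* v t"
      using reach_without_edge[OF ends] by auto
    then show ?thesis by (rule rtranclp_trans[OF reach_sym])
  qed
  then have "connected_graph V (E - {{a, b}})" using v by (auto simp: connected_graph_def)
  then show False using br by (simp add: is_bridge_def)
qed

(* A walk from x that never reaches v cannot use an edge at v *)
lemma reach_avoiding_vertex:
  assumes "\<not> (adj E)\<^sup>*\<^sup>* x v" "v \<in> e"
  shows "(adj E)\<^sup>*\<^sup>* x w \<Longrightarrow> (adj (E - {e}))\<^sup>*\<^sup>* x w"
proof (induction rule: rtranclp_induct)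
  case base then show ?case by simp
next
  case (step z w)
  have "(adj E)\<^sup>*\<^sup>* x w" using step(1,2) by (rule rtranclp.rtrancl_into_rtrancl)
  then have "{z, w} \<noteq> e" using step(1) assms by auto
  then have "adj (E - {e}) z w" using step(2) by (simp add: adj_def)
  then show ?case using step(3) by (meson rtranclp.rtrancl_into_rtrancl)
qed

lemma component_shrinks:
  assumes fin: "finite V" and v: "v \<in> V" "v \<in> e"
    and x: "x \<in> comp_verts V (E - {e}) v"
    and cut: "\<not> (adj (E - {f}))\<^sup>*\<^sup>* v x"
  shows "card (comp_verts V (E - {f}) x) < card (comp_verts V (E - {e}) v)"
proof -
  have cut': "\<not> (adj (E - {f}))\<^sup>*\<^sup>* x v" using cut reach_sym[of "E - {f}" x v] by blast
  have vx: "(adj (E - {e}))\<^sup>*\<^sup>* v x" using x by (simp add: comp_verts_def)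
  have "comp_verts V (E - {f}) x \<subseteq> comp_verts V (E - {e}) v"
  proof
    fix w assume "w \<in> comp_verts V (E - {f}) x"
    then have w: "w \<in> V" "(adj (E - {f}))\<^sup>*\<^sup>* x w" by (simp_all add: comp_verts_def)
    have "(adj (E - {f} - {e}))\<^sup>*\<^sup>* x w" using reach_avoiding_vertex[OF cut' v(2) w(2)] .
    then have "(adj (E - {e}))\<^sup>*\<^sup>* x w" by (rule reach_mono[rotated]) blast
    then show "w \<in> comp_verts V (E - {e}) v" using vx w(1) by (simp add: comp_verts_def)
  qed
  moreover have "v \<notin> comp_verts V (E - {f}) x" using cut' by (simp add: comp_verts_def)
  moreover have "v \<in> comp_verts V (E - {e}) v" using v by (simp add: comp_verts_def)
  moreover have "finite (comp_verts V (E - {e}) v)"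
    using fin by (rule finite_subset[rotated]) (auto simp: comp_verts_def)
  ultimately show ?thesis by (intro psubset_card_mono) blast+
qed

section \<open>Descent on alpha-safe bridges\<close>

definition safe_bridge :: "'a set \<Rightarrow> 'a set set \<Rightarrow> 'a \<Rightarrow> 'a \<Rightarrow> bool" where
  "safe_bridge V E a b \<longleftrightarrow> a \<noteq> b \<and> is_bridge V E {a, b} \<and> \<not> alpha_critical_edge V E {a, b}"

definition side_size :: "'a set \<Rightarrow> 'a set set \<Rightarrow> 'a \<Rightarrow> 'a \<Rightarrow> nat" where
  "side_size V E a b = card (comp_verts V (E - {{a, b}}) a)"

lemma smaller_safe_bridge:
  assumes g: "is_graph V E"
    and bridges: "\<forall>f\<in>E. \<not> alpha_critical_edge V E f \<longrightarrow> is_bridge V E f"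
    and sb: "safe_bridge V E v1 v2"
    and not_crit: "\<not> alpha_critical_graph (comp_verts V (E - {{v1, v2}}) v1)
                                           (comp_edges V (E - {{v1, v2}}) v1)"
  shows "\<exists>x y. safe_bridge V E x y \<and> side_size V E x y < side_size V E v1 v2"
proof -
  have fin: "finite V" using g by (simp add: is_graph_def)
  have e: "\<not> alpha_critical_edge V E {v1, v2}" "{v1, v2} \<in> E"
    using sb by (auto simp: safe_bridge_def is_bridge_def)
  then have v1: "v1 \<in> V" using edge_subset[OF g] by blast
  obtain f where f1: "f \<in> comp_edges V (E - {{v1, v2}}) v1"
    and f1_safe: "\<not> alpha_critical_edge (comp_verts V (E - {{v1, v2}}) v1)
                                         (comp_edges V (E - {{v1, v2}}) v1) f"
    using not_crit by (auto simp: alpha_critical_graph_def)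
  have f_safe: "\<not> alpha_critical_edge V E f"
    using safe_in_side_imp_safe[OF fin e(1) f1 f1_safe] .
  have fE: "f \<in> E" using f1 by (simp add: comp_edges_def)
  then have br: "is_bridge V E f" using bridges f_safe by blast
  obtain a b where ab: "f = {a, b}" "a \<noteq> b" using g fE unfolding is_graph_def by blast
  obtain x y where xy: "f = {x, y}" "x \<noteq> y" and cut: "\<not> (adj (E - {f}))\<^sup>*\<^sup>* v1 x"
  proof -
    consider "\<not> (adj (E - {f}))\<^sup>*\<^sup>* v1 a" | "\<not> (adj (E - {f}))\<^sup>*\<^sup>* v1 b"
      using bridge_end_unreachable[OF br[unfolded ab] v1] ab(1) by blast
    then show thesis
    proof cases
      case 1
      then show thesis using that[of a b] ab by blast
    next
      case 2
      have "f = {b, a}" using ab(1) by blast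
      then show thesis using that[of b a] ab(2) 2 by blast
    qed
  qed
  have "x \<in> comp_verts V (E - {{v1, v2}}) v1" using f1 xy(1) by (auto simp: comp_edges_def)
  from component_shrinks[OF fin v1 _ this cut]
  have "side_size V E x y < side_size V E v1 v2" by (simp add: side_size_def xy(1))
  moreover have "safe_bridge V E x y" using xy br f_safe by (simp add: safe_bridge_def)
  ultimately show ?thesis by blast
qed

(* Hence an alpha-safe bridge with a smallest side yields an alpha-critical decomposition *)
lemma decomposition_if_safe_edges_are_bridges:
  assumes g: "is_graph V E"
    and bridges: "\<forall>f\<in>E. \<not> alpha_critical_edge V E f \<longrightarrow> is_bridge V E f"
    and not_crit: "\<not> alpha_critical_graph V E"
  shows "has_alpha_critical_decomposition V E"
proof -
  obtain e where e: "e \<in> E" "\<not> alpha_critical_edge V E e"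
    using not_crit by (auto simp: alpha_critical_graph_def)
  obtain u v where "e = {u, v}" "u \<noteq> v" using g e(1) unfolding is_graph_def by blast
  then have "safe_bridge V E u v" using e bridges by (simp add: safe_bridge_def)
  then obtain p where p: "case_prod (safe_bridge V E) p"
    and least: "\<And>q. case_prod (safe_bridge V E) q \<Longrightarrow>
                     case_prod (side_size V E) p \<le> case_prod (side_size V E) q"
    using ex_has_least_nat[of "case_prod (safe_bridge V E)" "(u, v)" "case_prod (side_size V E)"]
    by blast
  obtain v1 v2 where p_eq: "p = (v1, v2)" by (cases p)
  have sb: "safe_bridge V E v1 v2" using p p_eq by simp
  have "alpha_critical_graph (comp_verts V (E - {{v1, v2}}) v1) (comp_edges V (E - {{v1, v2}}) v1)"
  proof (rule ccontr)
    assume "\<not> ?thesis"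
    then obtain x y where "safe_bridge V E x y" "side_size V E x y < side_size V E v1 v2"
      using smaller_safe_bridge[OF g bridges sb] by blast
    then show False using least[of "(x, y)"] p_eq by simp
  qed
  then show ?thesis using sb by (auto simp: has_alpha_critical_decomposition_def safe_bridge_def)
qed

theorem mainTheorem8:
  fixes V :: "'a set" and E :: "'a set set"
  assumes "is_graph V E" and "connected_graph V E"
    and "\<forall>(W :: 'a set) (D :: 'a set set). is_graph W D \<and> connected_graph W D \<and>
           card W = card V \<and> alpha W D = alpha V E \<longrightarrow> fib_index V E \<ge> fib_index W D"
  shows "alpha_critical_graph V E \<or> has_alpha_critical_decomposition V E"
proof (cases "alpha_critical_graph V E")
  case True
  then show ?thesis by simp
next
  case False
  have "\<forall>f\<in>E. \<not> alpha_critical_edge V E f \<longrightarrow> is_bridge V E f"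
    using maximizer_safe_edge_is_bridge[OF assms] by blast
  then show ?thesis using decomposition_if_safe_edges_are_bridges[OF assms(1) _ False] by blast
qed

end
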